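(* Let $S\le T_n$ be a transformation monoid and $G$ the normalizer of $S$ in $S_n$. If $a\in S$ is $\mathcal R$-related in $SG$ to an idempotent $e$ of $SG$, then $e\in S$ and $a$ is $\mathcal R$-related in $S$ to $e$.
   Context: A transformation monoid is a subsemigroup of $T_n$ containing the identity map; $G=\{g\in S_n:g^{-1}Sg=S\}$ and $SG=\{sg:s\in S,g\in G\}$, a semigroup. For a semigroup $U$, elements $a,b\in U$ are $\mathcal R$-related in $U$ if there exist $u,v\in U^1$ with $a=bu$ and $b=av$, where $U^1$ is $U$ with an identity adjoined. *)

theory Defs
  imports Main
begin

text \<open>Transformations of {0..<n} (the n-element set), extended by the identity
outside {0..<n} so that they are total functions nat => nat.\<close>
definition transf :: "nat \<Rightarrow> (nat \<Rightarrow> nat) \<Rightarrow> bool" where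
  "transf n f \<longleftrightarrow> (\<forall>x<n. f x < n) \<and> (\<forall>x\<ge>n. f x = x)"

definition Tn :: "nat \<Rightarrow> (nat \<Rightarrow> nat) set" where
  "Tn n = {f. transf n f}"

text \<open>Maps act on the right, as usual in semigroup theory: x(fg) = (xf)g.\<close>
definition tmult :: "(nat \<Rightarrow> nat) \<Rightarrow> (nat \<Rightarrow> nat) \<Rightarrow> (nat \<Rightarrow> nat)" where
  "tmult f g = g \<circ> f"

definition Sn :: "nat \<Rightarrow> (nat \<Rightarrow> nat) set" where
  "Sn n = {g \<in> Tn n. bij_betw g {..<n} {..<n}}"

definition transformation_monoid :: "nat \<Rightarrow> (nat \<Rightarrow> nat) set \<Rightarrow> bool" where
  "transformation_monoid n S \<longleftrightarrow> S \<subseteq> Tn n \<and> id \<in> S \<and>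
     (\<forall>a\<in>S. \<forall>b\<in>S. tmult a b \<in> S)"

text \<open>G = {g in S_n : g^-1 S g = S}; inverse taken in S_n (g is a bijection of nat).\<close>
definition normalizer :: "nat \<Rightarrow> (nat \<Rightarrow> nat) set \<Rightarrow> (nat \<Rightarrow> nat) set" where
  "normalizer n S = {g \<in> Sn n. (\<lambda>s. tmult (tmult (inv g) s) g) ` S = S}"

definition setprod :: "(nat \<Rightarrow> nat) set \<Rightarrow> (nat \<Rightarrow> nat) set \<Rightarrow> (nat \<Rightarrow> nat) set" where
  "setprod S G = {tmult s g | s g. s \<in> S \<and> g \<in> G}"

text \<open>Green's R-relation in U, with U^1 = U plus an adjoined identity.\<close>
definition R_rel :: "(nat \<Rightarrow> nat) set \<Rightarrow> (nat \<Rightarrow> nat) \<Rightarrow> (nat \<Rightarrow> nat) \<Rightarrow> bool" where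
  "R_rel U a b \<longleftrightarrow> a \<in> U \<and> b \<in> U \<and>
     (a = b \<or> (\<exists>u\<in>U. a = tmult b u)) \<and> (b = a \<or> (\<exists>v\<in>U. b = tmult a v))"

end

theory Submission
  imports Defs "HOL-Library.FuncSet"
begin

text \<open>Write \<open>e = a t h\<close> with \<open>t \<in> S\<close> and \<open>h \<in> G\<close>, and put \<open>x = a t \<in> S\<close>.
Since \<open>h\<close> normalizes \<open>S\<close>, it can be moved past elements of \<open>S\<close>, so that
\<open>(x h)\<^sup>k = x w h\<^sup>k\<close> for some \<open>w \<in> S\<close>. Taking \<open>k\<close> to be the order of \<open>h\<close> in
\<open>S\<^sub>n\<close> and using that \<open>e\<close> is idempotent gives \<open>e = e\<^sup>k = x w = a (t w)\<close>, so
\<open>e \<in> S\<close> and \<open>e \<in> a S\<close>; conversely \<open>a \<in> e SG\<close> forces \<open>a = e a\<close>.\<close>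

lemma tmult_assoc: "tmult (tmult f g) h = tmult f (tmult g h)"
  by (simp add: tmult_def comp_assoc)

lemma tmult_id_right [simp]: "tmult f id = f"
  by (simp add: tmult_def)

lemma funpow_idempotent: "f \<circ> f = f \<Longrightarrow> f ^^ Suc k = f"
  by (induction k) (auto simp: funpow_Suc_right simp del: funpow.simps)

lemma finite_Tn: "finite (Tn n)"
proof -
  have "inj_on (\<lambda>f. restrict f {..<n}) (Tn n)"
  proof (rule inj_onI)
    fix f g assume "f \<in> Tn n" "g \<in> Tn n" and eq: "restrict f {..<n} = restrict g {..<n}"
    show "f = g"
    proof
      fix x
      show "f x = g x"
        using fun_cong[OF eq, of x] \<open>f \<in> Tn n\<close> \<open>g \<in> Tn n\<close>
        by (cases "x < n") (simp_all add: Tn_def transf_def)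
    qed
  qed
  moreover have "(\<lambda>f. restrict f {..<n}) ` Tn n \<subseteq> {..<n} \<rightarrow>\<^sub>E {..<n}"
    by (rule image_subsetI) (simp add: Tn_def transf_def restrict_PiE_iff)
  ultimately show ?thesis
    by (meson finite_PiE finite_lessThan finite_imageD finite_subset)
qed

lemma transf_funpow: "transf n f \<Longrightarrow> transf n (f ^^ k)"
  by (induction k) (auto simp: transf_def)

lemma inj_if_Sn:
  assumes "h \<in> Sn n"
  shows "inj h"
proof (rule injI)
  fix x y assume eq: "h x = h y"
  have h: "transf n h" "inj_on h {..<n}"
    using assms by (auto simp: Sn_def Tn_def bij_betw_def)
  show "x = y"
  proof (cases "x < n \<and> y < n")
    case True
    then show ?thesis
      using h(2) eq by (auto dest: inj_onD)
  next
    case False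
    then show ?thesis
      using h(1) eq unfolding transf_def by (metis not_le)
  qed
qed

lemma funpow_eq_id_if_finite_powers:
  assumes "inj f" and "finite (range (\<lambda>i. f ^^ i))"
  shows "\<exists>k>0. f ^^ k = id"
proof -
  obtain i j where "f ^^ i = f ^^ j" "i < j"
    using assms(2) finite_imageD infinite_UNIV_nat
    by (metis inj_def linorder_neqE_nat)
  then have "f ^^ i \<circ> f ^^ (j - i) = f ^^ i \<circ> id"
    by (metis funpow_add comp_id le_add_diff_inverse less_imp_le)
  moreover have "inj (f ^^ i)"
    using assms(1) by simp
  ultimately have "f ^^ (j - i) = id"
    by (metis fun.inj_map_strong inj_eq)
  then show ?thesis
    using \<open>i < j\<close> zero_less_diff by blast
qed

lemma Sn_funpow_eq_id:
  assumes "h \<in> Sn n"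
  shows "\<exists>k>0. h ^^ k = id"
proof (rule funpow_eq_id_if_finite_powers)
  show "inj h"
    using assms by (rule inj_if_Sn)
  have "range (\<lambda>i. h ^^ i) \<subseteq> Tn n"
    using assms transf_funpow by (auto simp: Sn_def Tn_def)
  then show "finite (range (\<lambda>i. h ^^ i))"
    using finite_Tn finite_subset by blast
qed

lemma normalizer_commute:
  assumes "h \<in> normalizer n S" and "s \<in> S"
  shows "\<exists>s'\<in>S. tmult h s = tmult s' h"
proof -
  have "s \<in> (\<lambda>s. tmult (tmult (inv h) s) h) ` S"
    using assms by (simp add: normalizer_def)
  then obtain s' where "s' \<in> S" "s = h \<circ> s' \<circ> inv h"
    by (auto simp: tmult_def comp_assoc)
  moreover have "inj h"
    using assms(1) inj_if_Sn by (auto simp: normalizer_def)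
  ultimately show ?thesis
    by (auto simp: tmult_def comp_assoc)
qed

lemma funpow_tmult_normalizer:
  assumes tm: "transformation_monoid n S" and x: "x \<in> S" and h: "h \<in> normalizer n S"
  shows "\<exists>w\<in>S. tmult x h ^^ Suc k = tmult (tmult x w) (h ^^ Suc k)"
proof (induction k)
  case 0
  show ?case
    using tm by (intro bexI[of _ id]) (simp_all add: tmult_def transformation_monoid_def)
next
  case (Suc k)
  then obtain w where w: "w \<in> S" "tmult x h ^^ Suc k = tmult (tmult x w) (h ^^ Suc k)"
    by blast
  have "tmult x w \<in> S"
    using tm x w(1) by (simp add: transformation_monoid_def)
  then obtain s where s: "s \<in> S" "tmult h (tmult x w) = tmult s h"
    using normalizer_commute[OF h] by blast
  have "tmult x h ^^ Suc (Suc k) = tmult (tmult x h) (tmult x h ^^ Suc k)"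
    by (simp only: tmult_def funpow_Suc_right)
  also have "\<dots> = tmult x (tmult (tmult h (tmult x w)) (h ^^ Suc k))"
    by (simp only: w(2) tmult_assoc)
  also have "\<dots> = tmult x (tmult s (h ^^ Suc (Suc k)))"
    by (simp only: s(2) tmult_assoc) (simp only: tmult_def funpow_Suc_right[where f = h and n = "Suc k"])
  finally show ?case
    using s(1) unfolding tmult_assoc by blast
qed

lemma idempotent_tmult_normalizer:
  assumes "transformation_monoid n S" and "x \<in> S" and h: "h \<in> normalizer n S"
    and "tmult (tmult x h) (tmult x h) = tmult x h"
  shows "\<exists>w\<in>S. tmult x h = tmult x w"
proof -
  have "h \<in> Sn n"
    using h by (simp add: normalizer_def)
  then obtain k where "h ^^ Suc k = id"
    using Sn_funpow_eq_id gr0_implies_Suc by metis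
  moreover obtain w where "w \<in> S" "tmult x h ^^ Suc k = tmult (tmult x w) (h ^^ Suc k)"
    using funpow_tmult_normalizer assms(1-3) by blast
  moreover have "tmult x h ^^ Suc k = tmult x h"
    using assms(4) funpow_idempotent by (simp add: tmult_def)
  ultimately show ?thesis
    by (metis tmult_id_right)
qed

theorem lemma4p2:
  fixes n :: nat and S :: "(nat \<Rightarrow> nat) set" and a e :: "nat \<Rightarrow> nat"
  assumes "transformation_monoid n S"
    and "a \<in> S"
    and "e \<in> setprod S (normalizer n S)"
    and "tmult e e = e"
    and "R_rel (setprod S (normalizer n S)) a e"
  shows "e \<in> S \<and> R_rel S a e"
proof -
  have closed: "\<And>p q. p \<in> S \<Longrightarrow> q \<in> S \<Longrightarrow> tmult p q \<in> S" and "id \<in> S"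
    using assms(1) by (auto simp: transformation_monoid_def)
  obtain w where w: "w \<in> S" "e = tmult a w"
  proof (cases "e = a")
    case False
    then obtain t h where t: "t \<in> S" and h: "h \<in> normalizer n S" and "e = tmult (tmult a t) h"
      using assms(5) by (auto simp: R_rel_def setprod_def tmult_assoc)
    then obtain w where "w \<in> S" "e = tmult (tmult a t) w"
      using idempotent_tmult_normalizer[OF assms(1) closed[OF assms(2) t] h] assms(4) by metis
    then show thesis
      using that closed[OF t] by (metis tmult_assoc)
  qed (use \<open>id \<in> S\<close> in auto)
  have "a = tmult e a"
    using assms(4,5) by (auto simp: R_rel_def tmult_assoc[symmetric])
  then show ?thesis
    using closed[OF assms(2) w(1)] assms(2) w by (auto simp: R_rel_def)
qed

end
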